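(* Suppose the strong recursive skeletonization factorization (RS-S) described in the context is computed for $K\in\mathbb{C}^{N\times N}$ using a tree with $L=O(\log N)$ levels in $d$ dimensions such that each leaf box contains at most a constant number (independent of $N$) of DOFs, and that a constant number $n_p$ (independent of $N$) of proxy points is used to discretize each proxy surface. Let $k_\ell$ be the maximum of $|\mathcal{S}_i|$ over all boxes $i$ at level $\ell$, and assume $k_\ell\le k_{\ell+1}$ for all $\ell$. Then the cost $t_f$ of constructing the factorization $F$ and the cost $t_s$ of applying $F$ or $F^{-1}$ to a vector satisfy $$t_f=O(N)+\sum_{\ell=1}^{L-2}O\big(2^{d(L-\ell)}k_\ell^3\big),\qquad t_s=O(N)+\sum_{\ell=1}^{L-2}O\big(2^{d(L-\ell)}k_\ell^2\big),$$ and the memory required to store $F$ is $m_f=O(t_s)$.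
   Context: Let $K\in\mathbb{C}^{N\times N}$ have rows and columns indexed by $[N]$; each index (a "DOF") is associated with a point $x_i\in\mathbb{R}^d$, $d\in\{2,3\}$; $K_{ij}$ for distinct points is given by kernel evaluations $K(x_i-x_j)$ (up to scaling) for a kernel satisfying a Green's-identity (single-layer) representation, e.g. the Laplace kernel. A quadtree/octree decomposition with levels $\ell=1$ (finest) to $L$ (root) is given, with at most $2^{d(L-\ell)}$ boxes at level $\ell$; boxes are processed in a bottom-up level-by-level order, levels $1,\dots,L-2$. For box $i$ at level $\ell$: $\mathcal{B}_i$ = currently active DOFs in the box (for $\ell>1$, the union of the skeleton sets of its children), $\mathcal{N}_i$ = active DOFs in adjacent same-level boxes, $\mathcal{F}_i$ = remaining active DOFs; $\mathcal{O}_i\subseteq\mathcal{F}_i$ are those lying in same-level boxes not entirely outside the circle/sphere $\Gamma$ of radius $\tfrac52$ times the box sidelength centred at the box centre. An interpolative decomposition (ID) partitions $\mathcal{B}_i=\mathcal{R}_i\cup\mathcal{S}_i$ with interpolation matrix $T$; it is computed from the matrix stacking $A_{\mathcal{O}_i\mathcal{B}_i}$, $A_{\mathcal{B}_i\mathcal{O}_i}^*$ and the $n_p\times|\mathcal{B}_i|$ matrices of kernel interactions between $n_p$ proxy points on $\Gamma$ and $\mathcal{B}_i$ (both orientations), at cost $O(mn^2)$ for an $m\times n$ matrix. Strong skeletonization then applies block row/column operations with the unit-triangular matrices built from $T$ (eliminating $\mathcal{R}_i$ against $\mathcal{S}_i$ in the far field) and a block Gaussian elimination of $\mathcal{R}_i$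 against $\mathcal{S}_i\cup\mathcal{N}_i$ (Schur complement update, cost $O(|\mathcal{I}|^3+|\mathcal{I}||\mathcal{J}|^2)$ for pivot set $\mathcal{I}$ and updated set $\mathcal{J}$); the DOFs in $\mathcal{R}_i$ become decoupled (inactive). The result is $F=\big(\prod_i V_i\big)P_tDP_t^*\big(\prod_i W_i\big)\approx K$, where each $V_i,W_i$ is a permutation times block unit-triangular matrices stored via their nonzero off-diagonal blocks, $P_t$ is a permutation and $D$ is block diagonal with blocks $X_{\mathcal{R}_i\mathcal{R}_i}$ (the pivot blocks) and one block on the DOFs remaining active at the end. $t_f$ counts the operations of this construction; $t_s$ the operations of applying $F$ or $F^{-1}=\big(\prod_i W_i^{-1}\big)P_tD^{-1}P_t^*\big(\prod_i V_i^{-1}\big)$ (with $D$ stored in factored form) to a vector; $m_f$ the storage of all these factors. *)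

theory Defs
  imports Complex_Main "HOL-Library.Cardinality"
begin

text \<open>DOFs are the indices 0..N-1. The tree is the uniform 2^d-ary tree with levels 1 (finest)
  to L (root); a box at level l is identified by its integer coordinate vector
  b :: 'd \<Rightarrow> int with 0 \<le> b j < 2^(L-l); lengths are measured in units of the box
  sidelength of that level. Each DOF is located (via its point x_i) in a leaf box leaf i.\<close>

type_synonym 'd box = "'d \<Rightarrow> int"

definition boxes :: "nat \<Rightarrow> nat \<Rightarrow> ('d::finite) box set" where
  "boxes L l = {b. \<forall>j. 0 \<le> b j \<and> b j < 2 ^ (L - l)}"

definition parent :: "('d::finite) box \<Rightarrow> 'd box" where
  "parent c = (\<lambda>j. c j div 2)"

text \<open>B_i: the DOFs of box b at level l at the time level l is processed: at level 1 all
  DOFs in the leaf, at higher levels the union of the skeletons of its children.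
  S l b is the skeleton set chosen by the ID for box b at level l.\<close>
definition actB :: "nat \<Rightarrow> (nat \<Rightarrow> ('d::finite) box) \<Rightarrow> (nat \<Rightarrow> 'd box \<Rightarrow> nat set)
    \<Rightarrow> nat \<Rightarrow> 'd box \<Rightarrow> nat set" where
  "actB N leaf S l b =
     (if l \<le> 1 then {i. i < N \<and> leaf i = b}
      else \<Union> {S (l - 1) c | c. parent c = b})"

definition adjacent :: "('d::finite) box \<Rightarrow> 'd box \<Rightarrow> bool" where
  "adjacent b c \<longleftrightarrow> b \<noteq> c \<and> (\<forall>j. \<bar>b j - c j\<bar> \<le> 1)"

text \<open>Box c is not entirely outside the proxy circle/sphere of radius 5/2 (sidelengths)
  centred at the centre of box b: the distance from the centre of b to the closed box c is
  at most 5/2.\<close>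
definition proxy_near :: "('d::finite) box \<Rightarrow> 'd box \<Rightarrow> bool" where
  "proxy_near b c \<longleftrightarrow>
     (\<Sum>j\<in>UNIV. (max (real_of_int \<bar>b j - c j\<bar> - 1/2) 0)\<^sup>2) \<le> (5/2)\<^sup>2"

text \<open>Boxes at each level are processed in the order given by ord l (smaller first).
  When box b is processed, a same-level box c that was already processed only has its
  skeleton active, otherwise all of B_c.\<close>
definition seen :: "nat \<Rightarrow> (nat \<Rightarrow> ('d::finite) box) \<Rightarrow> (nat \<Rightarrow> 'd box \<Rightarrow> nat set)
    \<Rightarrow> (nat \<Rightarrow> 'd box \<Rightarrow> nat) \<Rightarrow> nat \<Rightarrow> 'd box \<Rightarrow> 'd box \<Rightarrow> nat set" where
  "seen N leaf S ord l b c = (if ord l c < ord l b then S l c else actB N leaf S l c)"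

definition Nset :: "nat \<Rightarrow> (nat \<Rightarrow> ('d::finite) box) \<Rightarrow> (nat \<Rightarrow> 'd box \<Rightarrow> nat set)
    \<Rightarrow> (nat \<Rightarrow> 'd box \<Rightarrow> nat) \<Rightarrow> nat \<Rightarrow> nat \<Rightarrow> 'd box \<Rightarrow> nat set" where
  "Nset N leaf S ord L l b =
     \<Union> {seen N leaf S ord l b c | c. c \<in> boxes L l \<and> adjacent b c}"

definition Oset :: "nat \<Rightarrow> (nat \<Rightarrow> ('d::finite) box) \<Rightarrow> (nat \<Rightarrow> 'd box \<Rightarrow> nat set)
    \<Rightarrow> (nat \<Rightarrow> 'd box \<Rightarrow> nat) \<Rightarrow> nat \<Rightarrow> nat \<Rightarrow> 'd box \<Rightarrow> nat set" where
  "Oset N leaf S ord L l b =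
     \<Union> {seen N leaf S ord l b c | c. c \<in> boxes L l \<and> c \<noteq> b \<and> \<not> adjacent b c
                                     \<and> proxy_near b c}"

text \<open>Operation count for processing box b at level l:
  ID of a (2|O|+2 n_p) x |B| matrix: (2|O|+2 n_p)|B|^2;
  block row and column operations with T (|S| x |R|) on the rows/columns of B \<union> N:
  2 |R||S|(|B|+|N|);
  block Gaussian elimination with pivot set R and updated set S \<union> N:
  |R|^3 + |R||S \<union> N|^2.\<close>
definition box_tf :: "nat \<Rightarrow> nat \<Rightarrow> (nat \<Rightarrow> ('d::finite) box) \<Rightarrow> (nat \<Rightarrow> 'd box \<Rightarrow> nat set)
    \<Rightarrow> (nat \<Rightarrow> 'd box \<Rightarrow> nat) \<Rightarrow> nat \<Rightarrow> nat \<Rightarrow> 'd box \<Rightarrow> nat" where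
  "box_tf np N leaf S ord L l b =
     (let Bs = actB N leaf S l b; Ss = S l b; Rs = Bs - Ss;
          nB = card Bs; s = card Ss; r = card Rs;
          n = card (Nset N leaf S ord L l b); nO = card (Oset N leaf S ord L l b)
      in (2 * nO + 2 * np) * nB ^ 2 + 2 * r * s * (nB + n)
         + r ^ 3 + r * card (Ss \<union> Nset N leaf S ord L l b) ^ 2)"

text \<open>Storage (= application cost) of the factors produced by box b at level l:
  the local permutation (|B|), the T blocks in V_i and W_i (2|S||R|), the off-diagonal
  elimination blocks in V_i and W_i (2|R||S \<union> N|), and the factored pivot block (|R|^2).\<close>
definition box_store :: "nat \<Rightarrow> (nat \<Rightarrow> ('d::finite) box) \<Rightarrow> (nat \<Rightarrow> 'd box \<Rightarrow> nat set)
    \<Rightarrow> (nat \<Rightarrow> 'd box \<Rightarrow> nat) \<Rightarrow> nat \<Rightarrow> nat \<Rightarrow> 'd box \<Rightarrow> nat" where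
  "box_store N leaf S ord L l b =
     (let Bs = actB N leaf S l b; Ss = S l b; Rs = Bs - Ss;
          r = card Rs; s = card Ss
      in card Bs + 2 * s * r + 2 * r * card (Ss \<union> Nset N leaf S ord L l b) + r ^ 2)"

text \<open>DOFs remaining active after levels 1..L-2 have been processed.\<close>
definition final_set :: "nat \<Rightarrow> (nat \<Rightarrow> ('d::finite) box \<Rightarrow> nat set) \<Rightarrow> nat \<Rightarrow> nat set" where
  "final_set N S L =
     (if 3 \<le> L then \<Union> {S (L - 2) b | b. b \<in> boxes L (L - 2)}
      else {i. i < N})"

text \<open>t_f: construction cost (all boxes, plus dense factorization of the final block).\<close>
definition t_f :: "nat \<Rightarrow> nat \<Rightarrow> (nat \<Rightarrow> ('d::finite) box) \<Rightarrow> (nat \<Rightarrow> 'd box \<Rightarrow> nat set)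
    \<Rightarrow> (nat \<Rightarrow> 'd box \<Rightarrow> nat) \<Rightarrow> nat \<Rightarrow> nat" where
  "t_f np N leaf S ord L =
     (\<Sum>l\<in>{1..L-2}. \<Sum>b\<in>boxes L l. box_tf np N leaf S ord L l b)
     + card (final_set N S L) ^ 3"

text \<open>t_s: cost of applying F or F^{-1} (global permutation P_t, all stored blocks,
  factored final block).\<close>
definition t_s :: "nat \<Rightarrow> (nat \<Rightarrow> ('d::finite) box) \<Rightarrow> (nat \<Rightarrow> 'd box \<Rightarrow> nat set)
    \<Rightarrow> (nat \<Rightarrow> 'd box \<Rightarrow> nat) \<Rightarrow> nat \<Rightarrow> nat" where
  "t_s N leaf S ord L =
     N + (\<Sum>l\<in>{1..L-2}. \<Sum>b\<in>boxes L l. box_store N leaf S ord L l b)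
     + card (final_set N S L) ^ 2"

text \<open>m_f: storage of all factors (permutation P_t, stored blocks, factored final block).\<close>
definition m_f :: "nat \<Rightarrow> (nat \<Rightarrow> ('d::finite) box) \<Rightarrow> (nat \<Rightarrow> 'd box \<Rightarrow> nat set)
    \<Rightarrow> (nat \<Rightarrow> 'd box \<Rightarrow> nat) \<Rightarrow> nat \<Rightarrow> nat" where
  "m_f N leaf S ord L =
     N + (\<Sum>l\<in>{1..L-2}. \<Sum>b\<in>boxes L l. box_store N leaf S ord L l b)
     + card (final_set N S L) ^ 2"

definition kmax :: "(nat \<Rightarrow> ('d::finite) box \<Rightarrow> nat set) \<Rightarrow> nat \<Rightarrow> nat \<Rightarrow> nat" where
  "kmax S L l = Max ((\<lambda>b. card (S l b)) ` (boxes L l :: 'd box set))"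

definition valid_run :: "nat \<Rightarrow> nat \<Rightarrow> nat \<Rightarrow> (nat \<Rightarrow> ('d::finite) box)
    \<Rightarrow> (nat \<Rightarrow> 'd box \<Rightarrow> nat set) \<Rightarrow> (nat \<Rightarrow> 'd box \<Rightarrow> nat) \<Rightarrow> bool" where
  "valid_run c N L leaf S ord \<longleftrightarrow>
     1 \<le> L \<and>
     (\<forall>i<N. leaf i \<in> boxes L 1) \<and>
     (\<forall>b. card {i. i < N \<and> leaf i = b} \<le> c) \<and>
     (\<forall>l\<in>{1..L-2}. \<forall>b. S l b \<subseteq> actB N leaf S l b) \<and>
     (\<forall>l. inj_on (ord l) (boxes L l))"

end

theory Submission
  imports Defs "HOL-Library.FuncSet"
begin

text \<open>A box at level l only interacts with boxes within Chebyshev distance 3 (adjacent or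
  proxy-near boxes), of which there are 7^d, and each of these has at most M_l active DOFs, where
  M_1 = c and M_l = 2^d k_l for l \<ge> 2: a box collects the skeletons of its 2^d children, and
  k_(l-1) \<le> k_l. Hence a box costs O(|B| (M_l + n_p)^2) operations and stores O(|B| M_l) numbers.
  On level 1 the sets B partition the N DOFs, which gives O(N); on a level l \<ge> 2 each of the
  2^(d(L-l)) boxes costs O(k_l^3), resp. O(k_l^2). The final dense block has at most 4^d k_(L-2)
  DOFs, or at most 2^d c when L < 3, and m_f = t_s by definition.\<close>

lemma cube_eq_PiE: "{x::'a::finite \<Rightarrow> 'b. \<forall>j. x j \<in> F j} = Pi\<^sub>E UNIV F"
  by (auto simp: PiE_UNIV_domain Pi_def)

lemma card_cube: "card {x::'a::finite \<Rightarrow> 'b. \<forall>j. x j \<in> F j} = (\<Prod>j\<in>UNIV. card (F j))"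
  by (simp add: cube_eq_PiE card_PiE)

lemma finite_cube:
  assumes "\<And>j. finite (F j)"
  shows "finite {x::'a::finite \<Rightarrow> 'b. \<forall>j. x j \<in> F j}"
  unfolding cube_eq_PiE using assms by (intro finite_PiE) auto

lemma boxes_eq_cube: "boxes L l = {b::('d::finite) box. \<forall>j. b j \<in> {0..<2^(L-l)}}"
  by (auto simp: boxes_def)

lemma finite_boxes: "finite (boxes L l :: ('d::finite) box set)"
  unfolding boxes_eq_cube by (rule finite_cube) auto

lemma card_boxes: "card (boxes L l :: ('d::finite) box set) = 2 ^ (CARD('d) * (L - l))"
proof -
  have "card (boxes L l :: 'd box set) = (2 ^ (L - l)) ^ CARD('d)"
    unfolding boxes_eq_cube card_cube by (simp add: nat_power_eq)
  then show ?thesis by (simp add: power_mult[symmetric] mult.commute)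
qed

definition children :: "('d::finite) box \<Rightarrow> 'd box set" where
  "children b = {c. \<forall>j. c j \<in> {2 * b j, 2 * b j + 1}}"

lemma parent_eq_iff_children: "{c. parent c = b} = children b"
proof -
  have "\<And>x y::int. x div 2 = y \<longleftrightarrow> x \<in> {2*y, 2*y+1}" by auto
  then show ?thesis unfolding children_def parent_def by (auto simp: fun_eq_iff)
qed

lemma finite_children: "finite (children b)"
  unfolding children_def by (rule finite_cube) auto

lemma card_children: "card (children (b::('d::finite) box)) = 2 ^ CARD('d)"
  unfolding children_def card_cube by (simp add: numeral_2_eq_2)

lemma children_subset_boxes:
  assumes "b \<in> boxes L l" "1 \<le> l" "l \<le> L"
  shows "children b \<subseteq> boxes L (l - 1)"
proof
  fix c assume c: "c \<in> children b"
  have "0 \<le> c j \<and> c j < 2 ^ Suc (L - l)" for j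
  proof -
    have "c j \<in> {2 * b j, 2 * b j + 1}" "0 \<le> b j" "b j < 2 ^ (L - l)"
      using c assms(1) by (auto simp: children_def boxes_def)
    then show ?thesis by auto
  qed
  moreover have "L - (l - 1) = Suc (L - l)" using assms by simp
  ultimately show "c \<in> boxes L (l - 1)" unfolding boxes_def by auto
qed

definition near_boxes :: "('d::finite) box \<Rightarrow> 'd box set" where
  "near_boxes b = {c. \<forall>j. c j \<in> {b j - 3 .. b j + 3}}"

lemma finite_near_boxes: "finite (near_boxes b)"
  unfolding near_boxes_def by (rule finite_cube) auto

lemma card_near_boxes: "card (near_boxes (b::('d::finite) box)) = 7 ^ CARD('d)"
  unfolding near_boxes_def card_cube by simp

lemma adjacent_imp_near:
  assumes "adjacent b c"
  shows "c \<in> near_boxes b"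
proof -
  have "\<bar>b j - c j\<bar> \<le> 1" for j using assms by (auto simp: adjacent_def)
  then have "c j \<in> {b j - 3 .. b j + 3}" for j by (smt (verit) atLeastAtMost_iff)
  then show ?thesis by (simp add: near_boxes_def)
qed

lemma proxy_near_imp_near:
  assumes "proxy_near b c"
  shows "c \<in> near_boxes b"
proof -
  have "c j \<in> {b j - 3 .. b j + 3}" for j
  proof -
    let ?t = "max (real_of_int \<bar>b j - c j\<bar> - 1/2) 0"
    have "?t\<^sup>2 \<le> (\<Sum>j\<in>UNIV. (max (real_of_int \<bar>b j - c j\<bar> - 1/2) 0)\<^sup>2)"
      by (rule member_le_sum) auto
    also have "\<dots> \<le> (5/2)\<^sup>2" using assms by (simp add: proxy_near_def)
    finally have "?t \<le> 5/2" by (rule power2_le_imp_le) simp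
    then have "real_of_int \<bar>b j - c j\<bar> \<le> 3" by (simp add: max_def split: if_splits)
    then show ?thesis by auto
  qed
  then show ?thesis by (simp add: near_boxes_def)
qed

lemma sum_le_card_mult: "(\<And>i. i \<in> A \<Longrightarrow> f i \<le> (K::nat)) \<Longrightarrow> sum f A \<le> card A * K"
  using sum_bounded_above[of A f K] by simp

text \<open>r, s, u, n, nB, nO stand for |R|, |S|, |S \<union> N|, |N|, |B|, |O| of one box.\<close>

lemma box_tf_arith:
  fixes r s u n nB nO np T :: nat
  assumes "r \<le> nB" "s \<le> nB" "u \<le> s + n" "nB + n \<le> T" "nO + np \<le> T"
  shows "(2*nO + 2*np)*nB^2 + 2*r*s*(nB + n) + r^3 + r*u^2 \<le> 6*nB*T^2"
proof -
  have T: "nB \<le> T" "s \<le> T" "u \<le> T" using assms by auto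
  have "(2*nO + 2*np)*nB^2 \<le> (2*T)*(nB*T)"
    by (rule mult_le_mono) (use assms T in \<open>auto simp: power2_eq_square\<close>)
  moreover have "2*r*s*(nB + n) \<le> 2*nB*T*T" "r*(u*u) \<le> nB*(T*T)"
    using assms T by (auto intro!: mult_le_mono)
  moreover have "r^3 \<le> nB*T*T"
    using assms T by (simp add: power3_eq_cube mult_le_mono)
  ultimately show ?thesis by (simp add: power2_eq_square algebra_simps)
qed

lemma box_store_arith:
  fixes r s u n nB :: nat
  assumes "r \<le> nB" "s \<le> nB" "u \<le> s + n"
  shows "nB + 2*s*r + 2*r*u + r^2 \<le> nB * (1 + 5*(nB + n))"
proof -
  have "s*r \<le> (nB + n)*nB" "r*u \<le> nB*(nB + n)" "r^2 \<le> nB*(nB + n)"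
    using assms by (auto intro!: mult_le_mono simp: power2_eq_square)
  then show ?thesis by (simp add: algebra_simps)
qed

lemma mult_square_affine_le: "(k::nat) * (\<alpha>*k + p)^2 \<le> (\<alpha> + p)^2 * k^3"
proof (cases "k = 0")
  case False
  then have "\<alpha>*k + p \<le> (\<alpha> + p)*k" by (simp add: algebra_simps)
  then have "(\<alpha>*k + p)^2 \<le> ((\<alpha> + p)*k)^2" by (rule power_mono) simp
  then have "k*(\<alpha>*k + p)^2 \<le> k*((\<alpha> + p)*k)^2" by simp
  then show ?thesis by (simp add: power2_eq_square power3_eq_cube algebra_simps)
qed simp

lemma mult_affine_le: "(k::nat) * (\<alpha>*k + 1) \<le> (\<alpha> + 1) * k^2"
proof (cases "k = 0")
  case False
  then have "\<alpha>*k + 1 \<le> (\<alpha> + 1)*k" by (simp add: algebra_simps)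
  then have "k*(\<alpha>*k + 1) \<le> k*((\<alpha> + 1)*k)" by (rule mult_le_mono2)
  then show ?thesis by (simp add: power2_eq_square algebra_simps)
qed simp

lemma sum_levels_le:
  fixes f g :: "nat \<Rightarrow> nat"
  assumes "\<And>l. l \<in> {1..M} \<Longrightarrow> f l \<le> (if l = 1 then X else Y * g l)"
  shows "(\<Sum>l\<in>{1..M}. f l) \<le> X + Y * (\<Sum>l\<in>{1..M}. g l)"
proof -
  have "(\<Sum>l\<in>{1..M}. f l) \<le> (\<Sum>l\<in>{1..M}. (if l = 1 then X else 0) + Y * g l)"
  proof (rule sum_mono)
    fix l assume "l \<in> {1..M}"
    from assms[OF this] show "f l \<le> (if l = 1 then X else 0) + Y * g l" by (cases "l = 1") auto
  qed
  also have "\<dots> = (if 1 \<in> {1..M} then X else 0) + Y * (\<Sum>l\<in>{1..M}. g l)"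
    by (simp add: sum.distrib sum_distrib_left sum.delta)
  also have "\<dots> \<le> X + Y * (\<Sum>l\<in>{1..M}. g l)" by simp
  finally show ?thesis .
qed

lemma add_linear_bounds:
  fixes A B N G :: nat
  assumes "A \<le> a\<^sub>1 * N + a\<^sub>2 * G" "B \<le> b\<^sub>1 * N + b\<^sub>2 * G"
  shows "A + B \<le> (a\<^sub>1 + b\<^sub>1) * N + (a\<^sub>2 + b\<^sub>2) * G"
  using add_mono[OF assms] by (simp add: add_mult_distrib)

lemma last_level_le_sum:
  assumes "3 \<le> L"
  shows "2^(d*2) * f (L-2) \<le> (\<Sum>l\<in>{1..L-2}. (2::nat)^(d*(L-l)) * f l)"
proof -
  have "2^(d*(L-(L-2))) * f (L-2) \<le> (\<Sum>l\<in>{1..L-2}. (2::nat)^(d*(L-l)) * f l)"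
    by (rule member_le_sum) (use assms in auto)
  moreover have "L - (L-2) = 2" using assms by simp
  ultimately show ?thesis by simp
qed

context
  fixes c N L :: nat and leaf :: "nat \<Rightarrow> ('d::finite) box" and S ord
  assumes run: "valid_run c N L leaf S ord"
  and kmax_mono: "\<forall>l. 1 \<le> l \<and> l < L - 2 \<longrightarrow> kmax S L l \<le> kmax S L (Suc l)"
begin

lemma skeleton_subset: "1 \<le> l \<Longrightarrow> l \<le> L - 2 \<Longrightarrow> S l b \<subseteq> actB N leaf S l b"
  using run by (auto simp: valid_run_def)

lemma actB_subset: "1 \<le> l \<Longrightarrow> l \<le> L - 2 \<Longrightarrow> actB N leaf S l b \<subseteq> {..<N}"
proof (induction l arbitrary: b)
  case (Suc m)
  show ?case
  proof (cases "m = 0")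
    case False
    have "S m b' \<subseteq> {..<N}" for b'
      using skeleton_subset[of m b'] Suc False by auto
    then show ?thesis using False by (auto simp: actB_def)
  qed (auto simp: actB_def)
qed simp

lemma finite_actB: "1 \<le> l \<Longrightarrow> l \<le> L - 2 \<Longrightarrow> finite (actB N leaf S l b)"
  using actB_subset finite_subset by blast

lemma finite_skeleton: "1 \<le> l \<Longrightarrow> l \<le> L - 2 \<Longrightarrow> finite (S l b)"
  using skeleton_subset finite_actB finite_subset by blast

lemma card_skeleton_le_actB: "1 \<le> l \<Longrightarrow> l \<le> L - 2 \<Longrightarrow> card (S l b) \<le> card (actB N leaf S l b)"
  by (rule card_mono[OF finite_actB skeleton_subset])

lemma card_skeleton_le_kmax: "b \<in> boxes L l \<Longrightarrow> card (S l b) \<le> kmax S L l"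
  unfolding kmax_def by (rule Max_ge) (auto simp: finite_boxes)

lemma card_actB_leaf: "card (actB N leaf S 1 b) \<le> c"
  using run by (simp add: actB_def valid_run_def)

lemma card_actB_le_kmax:
  assumes "2 \<le> l" "l \<le> L - 2" "b \<in> boxes L l"
  shows "card (actB N leaf S l b) \<le> 2 ^ CARD('d) * kmax S L l"
proof -
  have "actB N leaf S l b = (\<Union>b'\<in>children b. S (l - 1) b')"
    using assms by (auto simp: actB_def parent_eq_iff_children[symmetric])
  then have "card (actB N leaf S l b) \<le> (\<Sum>b'\<in>children b. card (S (l - 1) b'))"
    by (simp add: card_UN_le finite_children)
  also have "\<dots> \<le> card (children b) * kmax S L (l - 1)"
  proof (rule sum_le_card_mult)
    have "children b \<subseteq> boxes L (l - 1)" using assms by (intro children_subset_boxes) auto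
    then show "b' \<in> children b \<Longrightarrow> card (S (l - 1) b') \<le> kmax S L (l - 1)" for b'
      by (auto intro: card_skeleton_le_kmax)
  qed
  also have "kmax S L (l - 1) \<le> kmax S L l"
    using kmax_mono[rule_format, of "l - 1"] assms by (simp add: Suc_le_eq)
  finally show ?thesis by (simp add: card_children)
qed

definition active_bound :: "nat \<Rightarrow> nat" where
  "active_bound l = (if l = 1 then c else 2 ^ CARD('d) * kmax S L l)"

lemma card_actB_le_active_bound:
  assumes "1 \<le> l" "l \<le> L - 2" "b \<in> boxes L l"
  shows "card (actB N leaf S l b) \<le> active_bound l"
  using assms card_actB_leaf card_actB_le_kmax[of l b] by (cases "l = 1") (auto simp: active_bound_def)

lemma card_seen_le_active_bound:
  assumes "1 \<le> l" "l \<le> L - 2" "b' \<in> boxes L l"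
  shows "card (seen N leaf S ord l b b') \<le> active_bound l"
  using card_actB_le_active_bound[OF assms] card_skeleton_le_actB[OF assms(1,2), of b']
  by (auto simp: seen_def)

lemma card_union_near_le:
  assumes "1 \<le> l" "l \<le> L - 2"
    and "X \<subseteq> (\<Union>b'\<in>near_boxes b \<inter> boxes L l. seen N leaf S ord l b b')"
  shows "card X \<le> 7 ^ CARD('d) * active_bound l"
proof -
  have "finite (\<Union>b'\<in>near_boxes b \<inter> boxes L l. seen N leaf S ord l b b')"
    using assms(1,2) finite_near_boxes finite_actB finite_skeleton by (auto simp: seen_def)
  then have "card X \<le> card (\<Union>b'\<in>near_boxes b \<inter> boxes L l. seen N leaf S ord l b b')"
    using assms(3) by (rule card_mono)
  also have "\<dots> \<le> (\<Sum>b'\<in>near_boxes b \<inter> boxes L l. card (seen N leaf S ord l b b'))"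
    by (simp add: card_UN_le finite_near_boxes)
  also have "\<dots> \<le> card (near_boxes b \<inter> boxes L l) * active_bound l"
    using assms(1,2) by (intro sum_le_card_mult card_seen_le_active_bound) auto
  also have "\<dots> \<le> 7 ^ CARD('d) * active_bound l"
    by (metis card_near_boxes card_mono finite_near_boxes inf_le1 mult_le_mono1)
  finally show ?thesis .
qed

lemma card_Nset_le:
  "1 \<le> l \<Longrightarrow> l \<le> L - 2 \<Longrightarrow> card (Nset N leaf S ord L l b) \<le> 7 ^ CARD('d) * active_bound l"
  by (rule card_union_near_le) (auto simp: Nset_def dest: adjacent_imp_near)

lemma card_Oset_le:
  "1 \<le> l \<Longrightarrow> l \<le> L - 2 \<Longrightarrow> card (Oset N leaf S ord L l b) \<le> 7 ^ CARD('d) * active_bound l"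
  by (rule card_union_near_le) (auto simp: Oset_def dest: proxy_near_imp_near)

lemma box_tf_le:
  assumes "1 \<le> l" "l \<le> L - 2" "b \<in> boxes L l"
  shows "box_tf np N leaf S ord L l b
    \<le> card (actB N leaf S l b) * (6 * ((1 + 7 ^ CARD('d)) * active_bound l + np)^2)"
proof -
  let ?B = "actB N leaf S l b" and ?M = "active_bound l"
  have B: "finite ?B" "S l b \<subseteq> ?B" using finite_actB skeleton_subset assms by auto
  have "box_tf np N leaf S ord L l b \<le> 6 * card ?B * (card ?B + 7 ^ CARD('d) * ?M + np)^2"
    unfolding box_tf_def Let_def
    using card_Nset_le[OF assms(1,2), of b] card_Oset_le[OF assms(1,2), of b] B
    by (intro box_tf_arith) (auto simp: card_mono card_Un_le)
  also have "\<dots> \<le> 6 * card ?B * ((1 + 7 ^ CARD('d)) * ?M + np)^2"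
    using card_actB_le_active_bound[OF assms]
    by (intro mult_le_mono2 power_mono) (auto simp: algebra_simps)
  finally show ?thesis by (simp add: ac_simps)
qed

lemma box_store_le:
  assumes "1 \<le> l" "l \<le> L - 2" "b \<in> boxes L l"
  shows "box_store N leaf S ord L l b
    \<le> card (actB N leaf S l b) * (1 + 5 * ((1 + 7 ^ CARD('d)) * active_bound l))"
proof -
  let ?B = "actB N leaf S l b"
  have B: "finite ?B" "S l b \<subseteq> ?B" using finite_actB skeleton_subset assms by auto
  have "box_store N leaf S ord L l b \<le> card ?B * (1 + 5 * (card ?B + card (Nset N leaf S ord L l b)))"
    unfolding box_store_def Let_def using B by (intro box_store_arith) (auto simp: card_mono card_Un_le)
  also have "\<dots> \<le> card ?B * (1 + 5 * ((1 + 7 ^ CARD('d)) * active_bound l))"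
    using card_actB_le_active_bound[OF assms] card_Nset_le[OF assms(1,2), of b]
    by (intro mult_le_mono2) (auto simp: algebra_simps)
  finally show ?thesis .
qed

lemma sum_card_actB_leaf: "(\<Sum>b\<in>boxes L 1. card (actB N leaf S 1 b)) = N"
proof -
  have "(\<Sum>b\<in>boxes L 1. card (actB N leaf S 1 b)) = card (\<Union>b\<in>boxes L 1. actB N leaf S 1 b)"
    by (rule card_UN_disjoint[symmetric]) (auto simp: finite_boxes actB_def)
  also have "(\<Union>b\<in>boxes L 1. actB N leaf S 1 b) = {..<N}"
    using run by (auto simp: actB_def valid_run_def)
  finally show ?thesis by simp
qed

lemma level_cost_le:
  assumes "1 \<le> l" "l \<le> L - 2"
    and cost: "\<And>b. b \<in> boxes L l \<Longrightarrow> f b \<le> card (actB N leaf S l b) * h (active_bound l)"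
  shows "(\<Sum>b\<in>boxes L l. f b) \<le> (if l = 1 then h c * N
           else 2 ^ (CARD('d) * (L - l)) * (active_bound l * h (active_bound l)))"
proof (cases "l = 1")
  case True
  have "(\<Sum>b\<in>boxes L l. f b) \<le> (\<Sum>b\<in>boxes L l. h c * card (actB N leaf S l b))"
    using cost True by (intro sum_mono) (simp add: active_bound_def mult.commute)
  also have "\<dots> = h c * N"
    using sum_card_actB_leaf unfolding True by (simp add: sum_distrib_left[symmetric])
  finally show ?thesis using True by simp
next
  case False
  have "f b \<le> active_bound l * h (active_bound l)" if "b \<in> boxes L l" for b
    using cost[OF that] card_actB_le_active_bound[OF assms(1,2) that] by (meson le_trans mult_le_mono1)
  then have "(\<Sum>b\<in>boxes L l. f b) \<le> card (boxes L l :: 'd box set) * (active_bound l * h (active_bound l))"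
    by (rule sum_le_card_mult)
  then show ?thesis using False by (simp add: card_boxes)
qed

lemma leaf_count_small: "L < 3 \<Longrightarrow> N \<le> 2 ^ CARD('d) * c"
proof -
  assume "L < 3"
  have "N = (\<Sum>b\<in>boxes L 1. card (actB N leaf S 1 b))" by (rule sum_card_actB_leaf[symmetric])
  also have "\<dots> \<le> card (boxes L 1 :: 'd box set) * c"
    by (intro sum_le_card_mult card_actB_leaf)
  also have "card (boxes L 1 :: 'd box set) \<le> 2 ^ CARD('d)"
    unfolding card_boxes using \<open>L < 3\<close> by (intro power_increasing) auto
  finally show ?thesis by simp
qed

lemma card_final_set_le:
  assumes "3 \<le> L"
  shows "card (final_set N S L) \<le> 2^(CARD('d)*2) * kmax S L (L-2)"
proof -
  have "card (final_set N S L) \<le> (\<Sum>b\<in>(boxes L (L-2) :: 'd box set). card (S (L-2) b))"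
    using assms card_UN_le[OF finite_boxes] by (simp add: final_set_def setcompr_eq_image)
  also have "\<dots> \<le> card (boxes L (L-2) :: 'd box set) * kmax S L (L-2)"
    by (intro sum_le_card_mult card_skeleton_le_kmax)
  finally show ?thesis using assms by (simp add: card_boxes)
qed

lemma card_final_set_pow_le:
  "card (final_set N S L) ^ Suc e \<le> (2 ^ CARD('d) * c) ^ e * N
    + 2 ^ (CARD('d) * 2 * e) * (\<Sum>l\<in>{1..L-2}. 2^(CARD('d)*(L-l)) * kmax S L l ^ Suc e)"
proof (cases "3 \<le> L")
  case True
  have "card (final_set N S L) ^ Suc e \<le> (2^(CARD('d)*2) * kmax S L (L-2)) ^ Suc e"
    using card_final_set_le[OF True] by (rule power_mono) simp
  also have "\<dots> = 2 ^ (CARD('d) * 2 * e) * (2^(CARD('d)*2) * kmax S L (L-2) ^ Suc e)"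
    by (simp add: power_mult_distrib power_add[symmetric] power_mult[symmetric])
  also have "\<dots> \<le> 2 ^ (CARD('d) * 2 * e) * (\<Sum>l\<in>{1..L-2}. 2^(CARD('d)*(L-l)) * kmax S L l ^ Suc e)"
    using True by (intro mult_le_mono2 last_level_le_sum)
  finally show ?thesis by (rule trans_le_add2)
next
  case False
  then have "N \<le> 2 ^ CARD('d) * c" by (simp add: leaf_count_small)
  then have "N ^ e * N \<le> (2 ^ CARD('d) * c) ^ e * N"
    by (intro mult_le_mono1 power_mono) auto
  moreover have "card (final_set N S L) ^ Suc e = N ^ e * N"
    using False by (simp add: final_set_def power_Suc2)
  ultimately show ?thesis by (simp add: trans_le_add1)
qed

lemma sum_levels_cost_le:
  assumes cost: "\<And>l b. 1 \<le> l \<Longrightarrow> l \<le> L - 2 \<Longrightarrow> b \<in> boxes L l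
      \<Longrightarrow> f l b \<le> card (actB N leaf S l b) * h (active_bound l)"
    and growth: "\<And>l. l \<noteq> 1 \<Longrightarrow> active_bound l * h (active_bound l) \<le> Y * g l"
  shows "(\<Sum>l\<in>{1..L-2}. \<Sum>b\<in>boxes L l. f l b)
    \<le> h c * N + Y * (\<Sum>l\<in>{1..L-2}. 2 ^ (CARD('d) * (L - l)) * g l)"
proof (rule sum_levels_le)
  fix l assume l: "l \<in> {1..L-2}"
  then have "(\<Sum>b\<in>boxes L l. f l b) \<le> (if l = 1 then h c * N
      else 2 ^ (CARD('d) * (L - l)) * (active_bound l * h (active_bound l)))"
    using cost by (intro level_cost_le) auto
  also have "\<dots> \<le> (if l = 1 then h c * N else Y * (2 ^ (CARD('d) * (L - l)) * g l))"
  proof (cases "l = 1")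
    case False
    then have "2 ^ (CARD('d) * (L - l)) * (active_bound l * h (active_bound l))
        \<le> 2 ^ (CARD('d) * (L - l)) * (Y * g l)"
      using growth by (intro mult_le_mono2)
    then show ?thesis using False by (simp add: mult.left_commute)
  qed simp
  finally show "(\<Sum>b\<in>boxes L l. f l b)
      \<le> (if l = 1 then h c * N else Y * (2 ^ (CARD('d) * (L - l)) * g l))" .
qed

lemma t_f_le:
  defines "\<alpha> \<equiv> (1 + 7^CARD('d)) * 2^CARD('d)"
  shows "t_f np N leaf S ord L
    \<le> (6 * ((1 + 7^CARD('d)) * c + np)^2 + (2^CARD('d) * c)^2) * N
      + (6 * 2^CARD('d) * (\<alpha> + np)^2 + 2^(CARD('d)*2*2))
        * (\<Sum>l\<in>{1..L-2}. 2^(CARD('d)*(L-l)) * kmax S L l ^ 3)"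
proof -
  have levels: "(\<Sum>l\<in>{1..L-2}. \<Sum>b\<in>boxes L l. box_tf np N leaf S ord L l b)
      \<le> 6 * ((1 + 7^CARD('d)) * c + np)^2 * N
        + 6 * 2^CARD('d) * (\<alpha> + np)^2 * (\<Sum>l\<in>{1..L-2}. 2^(CARD('d)*(L-l)) * kmax S L l ^ 3)"
  proof (rule sum_levels_cost_le)
    show "box_tf np N leaf S ord L l b \<le> card (actB N leaf S l b)
        * (6 * ((1 + 7^CARD('d)) * active_bound l + np)^2)"
      if "1 \<le> l" "l \<le> L - 2" "b \<in> boxes L l" for l b
      using that by (rule box_tf_le)
    show "active_bound l * (6 * ((1 + 7^CARD('d)) * active_bound l + np)^2)
        \<le> 6 * 2^CARD('d) * (\<alpha> + np)^2 * kmax S L l ^ 3" if "l \<noteq> 1" for l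
      using mult_square_affine_le[of "kmax S L l" \<alpha> np] that
      by (simp add: active_bound_def \<alpha>_def ac_simps)
  qed
  moreover have "card (final_set N S L) ^ 3 \<le> (2^CARD('d) * c)^2 * N
      + 2^(CARD('d)*2*2) * (\<Sum>l\<in>{1..L-2}. 2^(CARD('d)*(L-l)) * kmax S L l ^ 3)"
    using card_final_set_pow_le[of 2] by (simp only: Suc_numeral semiring_norm)
  ultimately show ?thesis unfolding t_f_def by (rule add_linear_bounds)
qed

lemma t_s_le:
  defines "\<beta> \<equiv> 5 * (1 + 7^CARD('d)) * 2^CARD('d)"
  shows "t_s N leaf S ord L
    \<le> (1 + (1 + 5 * ((1 + 7^CARD('d)) * c)) + 2^CARD('d) * c) * N
      + (2^CARD('d) * (\<beta> + 1) + 2^(CARD('d)*2))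
        * (\<Sum>l\<in>{1..L-2}. 2^(CARD('d)*(L-l)) * kmax S L l ^ 2)"
proof -
  have levels: "(\<Sum>l\<in>{1..L-2}. \<Sum>b\<in>boxes L l. box_store N leaf S ord L l b)
      \<le> (1 + 5 * ((1 + 7^CARD('d)) * c)) * N
        + 2^CARD('d) * (\<beta> + 1) * (\<Sum>l\<in>{1..L-2}. 2^(CARD('d)*(L-l)) * kmax S L l ^ 2)"
  proof (rule sum_levels_cost_le)
    show "box_store N leaf S ord L l b \<le> card (actB N leaf S l b)
        * (1 + 5 * ((1 + 7^CARD('d)) * active_bound l))"
      if "1 \<le> l" "l \<le> L - 2" "b \<in> boxes L l" for l b
      using that by (rule box_store_le)
    show "active_bound l * (1 + 5 * ((1 + 7^CARD('d)) * active_bound l))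
        \<le> 2^CARD('d) * (\<beta> + 1) * kmax S L l ^ 2" if "l \<noteq> 1" for l
    proof -
      have "active_bound l * (1 + 5 * ((1 + 7^CARD('d)) * active_bound l))
          = 2^CARD('d) * (kmax S L l * (\<beta> * kmax S L l + 1))"
        using that by (simp add: active_bound_def \<beta>_def algebra_simps)
      also have "\<dots> \<le> 2^CARD('d) * ((\<beta> + 1) * kmax S L l ^ 2)"
        by (intro mult_le_mono2 mult_affine_le)
      finally show ?thesis by (simp only: mult.assoc)
    qed
  qed
  have final: "card (final_set N S L) ^ 2 \<le> 2^CARD('d) * c * N
      + 2^(CARD('d)*2) * (\<Sum>l\<in>{1..L-2}. 2^(CARD('d)*(L-l)) * kmax S L l ^ 2)"
    using card_final_set_pow_le[of 1] by (simp only: Suc_1 power_one_right mult_1_right)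
  have "N \<le> 1 * N + 0 * (\<Sum>l\<in>{1..L-2}. 2^(CARD('d)*(L-l)) * kmax S L l ^ 2)" by simp
  from add_linear_bounds[OF add_linear_bounds[OF this levels] final] show ?thesis
    unfolding t_s_def by (simp only: add.left_neutral)
qed

end

lemma real_le_linear_combination:
  fixes t K1 K2 N G :: nat and C :: real
  assumes "t \<le> K1 * N + K2 * G" "real K1 \<le> C" "real K2 \<le> C"
  shows "real t \<le> C * (real N + real G)"
proof -
  have "real t \<le> real K1 * real N + real K2 * real G"
    using assms(1) by (metis of_nat_add of_nat_le_iff of_nat_mult)
  also have "\<dots> \<le> C * real N + C * real G"
    using assms by (intro add_mono mult_right_mono) auto
  finally show ?thesis by (simp add: algebra_simps)
qed

text \<open>Sum of all coefficients in the bounds t_f_le and t_s_le.\<close>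

definition cost_constant :: "nat \<Rightarrow> nat \<Rightarrow> nat \<Rightarrow> real" where
  "cost_constant d c np = real
     (6 * ((1 + 7^d) * c + np)^2 + (2^d * c)^2
      + 6 * 2^d * ((1 + 7^d) * 2^d + np)^2 + 2^(d*2*2)
      + 1 + (1 + 5 * ((1 + 7^d) * c)) + 2^d * c
      + 2^d * (5 * (1 + 7^d) * 2^d + 1) + 2^(d*2))"

lemma cost_constant_ge_1: "1 \<le> cost_constant d c np"
  by (simp add: cost_constant_def)

lemma cost_constant_pos: "0 < cost_constant d c np"
  using cost_constant_ge_1 by (rule less_le_trans[OF zero_less_one])

lemma rss_cost_bounds:
  fixes leaf :: "nat \<Rightarrow> ('d::finite) box" and np :: nat
  assumes run: "valid_run c N L leaf S ord"
    and kmax_mono: "\<forall>l. 1 \<le> l \<and> l < L - 2 \<longrightarrow> kmax S L l \<le> kmax S L (Suc l)"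
  defines "C \<equiv> cost_constant CARD('d) c np"
  shows "real (t_f np N leaf S ord L)
      \<le> C * (real N + (\<Sum>l\<in>{1..L-2}. 2 ^ (CARD('d) * (L - l)) * real (kmax S L l) ^ 3))"
    and "real (t_s N leaf S ord L)
      \<le> C * (real N + (\<Sum>l\<in>{1..L-2}. 2 ^ (CARD('d) * (L - l)) * real (kmax S L l) ^ 2))"
    and "real (m_f N leaf S ord L) \<le> C * real (t_s N leaf S ord L)"
proof -
  have "real (t_f np N leaf S ord L)
      \<le> C * (real N + real (\<Sum>l\<in>{1..L-2}. 2 ^ (CARD('d) * (L - l)) * kmax S L l ^ 3))"
    using t_f_le[OF run kmax_mono]
    by (rule real_le_linear_combination) (simp_all add: C_def cost_constant_def)
  then show "real (t_f np N leaf S ord L)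
      \<le> C * (real N + (\<Sum>l\<in>{1..L-2}. 2 ^ (CARD('d) * (L - l)) * real (kmax S L l) ^ 3))"
    by simp
  have "real (t_s N leaf S ord L)
      \<le> C * (real N + real (\<Sum>l\<in>{1..L-2}. 2 ^ (CARD('d) * (L - l)) * kmax S L l ^ 2))"
    using t_s_le[OF run kmax_mono]
    by (rule real_le_linear_combination) (simp_all add: C_def cost_constant_def)
  then show "real (t_s N leaf S ord L)
      \<le> C * (real N + (\<Sum>l\<in>{1..L-2}. 2 ^ (CARD('d) * (L - l)) * real (kmax S L l) ^ 2))"
    by simp
  have "m_f N leaf S ord L = t_s N leaf S ord L" unfolding m_f_def t_s_def ..
  then show "real (m_f N leaf S ord L) \<le> C * real (t_s N leaf S ord L)"
    using mult_right_mono[OF cost_constant_ge_1 of_nat_0_le_iff] by (simp add: C_def)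
qed

theorem theorem3p3:
  assumes "CARD('d) \<in> {2, 3}"
  shows "\<forall>(c::nat) (np::nat) (a::real). \<exists>C::real. C > 0 \<and>
    (\<forall>N L (leaf :: nat \<Rightarrow> ('d::finite) box) S ord.
       valid_run c N L leaf S ord
       \<and> real L \<le> a * ln (real N + 2)
       \<and> (\<forall>l. 1 \<le> l \<and> l < L - 2 \<longrightarrow> kmax S L l \<le> kmax S L (Suc l))
       \<longrightarrow>
         real (t_f np N leaf S ord L)
           \<le> C * (real N + (\<Sum>l\<in>{1..L-2}. 2 ^ (CARD('d) * (L - l)) * real (kmax S L l) ^ 3))
       \<and> real (t_s N leaf S ord L)
           \<le> C * (real N + (\<Sum>l\<in>{1..L-2}. 2 ^ (CARD('d) * (L - l)) * real (kmax S L l) ^ 2))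
       \<and> real (m_f N leaf S ord L) \<le> C * real (t_s N leaf S ord L))"
  apply (intro allI)
  subgoal for c np
    using rss_cost_bounds[where c = c and np = np] cost_constant_pos[of "CARD('d)" c np]
    by blast
  done

end
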